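(* Let $n,k$ be integers with $2\le k\le n/2$ and let $P$ be a Gutkin $(n,k)$-gon with vertices $v_0,\dots,v_{n-1}$. Then for every $i$, the interior angles of $P$ at the vertices $v_i$ and $v_{i+k-1}$ are equal (indices modulo $n$).
   Context: Let $P$ be a convex $n$-gon in the Euclidean plane with vertices $v_0,\dots,v_{n-1}$ in their cyclic (counterclockwise) order, indices taken modulo $n$. $P$ is a Gutkin $(n,k)$-gon if there exists an angle $\alpha$ such that for every $i$, $\angle v_{i+1}v_iv_{i+k}=\angle v_{i+k-1}v_{i+k}v_i=\alpha$, where $\angle abc$ denotes the angle at $b$ between the segments $ba$ and $bc$. *)

theory Defs
  imports "HOL-Analysis.Analysis"
begin

definition pangle :: "real^2 \<Rightarrow> real^2 \<Rightarrow> real^2 \<Rightarrow> real" where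
  "pangle a b c = arccos (((a - b) \<bullet> (c - b)) / (norm (a - b) * norm (c - b)))"

definition cross2 :: "real^2 \<Rightarrow> real^2 \<Rightarrow> real" where
  "cross2 u w = u$1 * w$2 - u$2 * w$1"

definition convex_ccw_polygon :: "nat \<Rightarrow> (nat \<Rightarrow> real^2) \<Rightarrow> bool" where
  "convex_ccw_polygon n v \<longleftrightarrow> n \<ge> 3 \<and>
     (\<forall>i<n. \<forall>j<n. i \<noteq> j \<longrightarrow> v i \<noteq> v j) \<and>
     (\<forall>i<n. \<forall>j<n. j \<noteq> i \<and> j \<noteq> (i + 1) mod n \<longrightarrow>
        cross2 (v ((i + 1) mod n) - v i) (v j - v i) > 0)"

definition gutkin_polygon :: "nat \<Rightarrow> nat \<Rightarrow> (nat \<Rightarrow> real^2) \<Rightarrow> bool" where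
  "gutkin_polygon n k v \<longleftrightarrow> convex_ccw_polygon n v \<and>
     (\<exists>\<alpha>. \<forall>i<n.
        pangle (v ((i + 1) mod n)) (v i) (v ((i + k) mod n)) = \<alpha> \<and>
        pangle (v ((i + k - 1) mod n)) (v ((i + k) mod n)) (v i) = \<alpha>)"

definition interior_angle :: "nat \<Rightarrow> (nat \<Rightarrow> real^2) \<Rightarrow> nat \<Rightarrow> real" where
  "interior_angle n v i =
     pangle (v ((i + n - 1) mod n)) (v (i mod n)) (v ((i + 1) mod n))"

end

theory Submission imports Defs begin

text \<open>Write \<open>e\<^sub>j = v\<^sub>j\<^sub>+\<^sub>1 - v\<^sub>j\<close> for the edges of the polygon. At \<open>v\<^sub>j\<close> the diagonal
  \<open>v\<^sub>j\<^sub>+\<^sub>k - v\<^sub>j\<close> makes the angle \<open>\<alpha>\<close> with \<open>e\<^sub>j\<close>, and at \<open>v\<^sub>j\<^sub>+\<^sub>k\<close> the edge \<open>e\<^sub>j\<^sub>+\<^sub>k\<^sub>-\<^sub>1\<close>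
  makes the angle \<open>\<alpha>\<close> with the same diagonal. Since the polygon is convex and
  counterclockwise, both turns are counterclockwise, so the direction of \<open>e\<^sub>j\<^sub>+\<^sub>k\<^sub>-\<^sub>1\<close>
  is that of \<open>e\<^sub>j\<close> rotated by \<open>2\<alpha>\<close>, for every \<open>j\<close>. The interior angle at \<open>v\<^sub>i\<close> is
  determined by the directions of \<open>e\<^sub>i\<^sub>-\<^sub>1\<close> and \<open>e\<^sub>i\<close>; rotating both by \<open>2\<alpha>\<close> gives
  the directions of \<open>e\<^sub>i\<^sub>+\<^sub>k\<^sub>-\<^sub>2\<close> and \<open>e\<^sub>i\<^sub>+\<^sub>k\<^sub>-\<^sub>1\<close>, and rotations preserve angles.\<close>

lemma mod_add_left_inj:
  fixes n j a b :: nat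
  assumes "a < n" "b < n" "(j + a) mod n = (j + b) mod n"
  shows "a = b"
proof -
  have "a = b" if "a \<le> b" "b < n" "(j + a) mod n = (j + b) mod n" for a b :: nat
  proof -
    have "n dvd b - a" using that mod_eq_dvd_iff_nat[of "j + a" "j + b" n] by simp
    with that show "a = b" by (cases "b - a = 0") (auto dest: dvd_imp_le)
  qed
  from this[of a b] this[of b a] show ?thesis using assms by linarith
qed

lemma inner_vec2: "(x::real^2) \<bullet> y = x$1 * y$1 + x$2 * y$2"
  by (simp add: inner_vec_def sum_2)

lemma norm_vec2_squared: "(norm (x::real^2))\<^sup>2 = (x$1)\<^sup>2 + (x$2)\<^sup>2"
  by (metis inner_vec2 power2_norm_eq_inner power2_eq_square)

definition vangle :: "'a::real_inner \<Rightarrow> 'a \<Rightarrow> real" where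
  "vangle a b = arccos ((a \<bullet> b) / (norm a * norm b))"

lemma pangle_eq_vangle: "pangle a b c = vangle (a - b) (c - b)"
  by (simp add: pangle_def vangle_def)

lemma vangle_commute: "vangle a b = vangle b a"
  by (simp add: vangle_def inner_commute mult.commute)

lemma vangle_minus: "vangle (- a) (- b) = vangle a b"
  by (simp add: vangle_def)

lemma vangle_sgn: "vangle a b = arccos (sgn a \<bullet> sgn b)"
  by (simp add: vangle_def sgn_div_norm divide_inverse mult_ac)

definition rotate2 :: "real \<Rightarrow> real^2 \<Rightarrow> real^2" where
  "rotate2 \<theta> u = (\<chi> i. if i = 1 then cos \<theta> * u$1 - sin \<theta> * u$2 else sin \<theta> * u$1 + cos \<theta> * u$2)"

lemma rotate2_nth [simp]:
  "rotate2 \<theta> u $ 1 = cos \<theta> * u$1 - sin \<theta> * u$2"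
  "rotate2 \<theta> u $ 2 = sin \<theta> * u$1 + cos \<theta> * u$2"
  by (simp_all add: rotate2_def)

lemma rotate2_rotate2: "rotate2 s (rotate2 t u) = rotate2 (s + t) u"
  by (simp add: vec_eq_iff forall_2 cos_add sin_add algebra_simps)

lemma inner_rotate2: "rotate2 \<theta> u \<bullet> rotate2 \<theta> w = u \<bullet> w"
  unfolding inner_vec2 rotate2_nth using sin_cos_squared_add[of \<theta>] by algebra

lemma cross2_sgn: "cross2 (sgn a) (sgn b) = cross2 a b / (norm a * norm b)"
  by (simp add: cross2_def sgn_div_norm divide_inverse) algebra

lemma sgn_eq_rotate2_vangle:
  fixes a b :: "real^2"
  assumes "cross2 a b > 0"
  shows "sgn b = rotate2 (vangle a b) (sgn a)"
proof -
  have "a \<noteq> 0" "b \<noteq> 0" using assms by (auto simp: cross2_def)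
  define u w where "u = sgn a" and "w = sgn b"
  define c d where "c = cross2 u w" and "d = u \<bullet> w"
  have unit: "(u$1)\<^sup>2 + (u$2)\<^sup>2 = 1" "(w$1)\<^sup>2 + (w$2)\<^sup>2 = 1"
    using norm_vec2_squared[of u] norm_vec2_squared[of w] \<open>a \<noteq> 0\<close> \<open>b \<noteq> 0\<close>
    by (simp_all add: u_def w_def norm_sgn)
  have "c > 0"
    using assms \<open>a \<noteq> 0\<close> \<open>b \<noteq> 0\<close> by (simp add: c_def u_def w_def cross2_sgn)
  have "c\<^sup>2 + d\<^sup>2 = ((u$1)\<^sup>2 + (u$2)\<^sup>2) * ((w$1)\<^sup>2 + (w$2)\<^sup>2)"
    by (simp add: c_def d_def cross2_def inner_vec2) algebra
  then have cd: "c\<^sup>2 + d\<^sup>2 = 1" using unit by simp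
  then have "\<bar>d\<bar> \<le> 1" using zero_le_power2[of c] abs_square_le_1[of d] by linarith
  have "sin (arccos d) = c"
    using cd \<open>c > 0\<close> \<open>\<bar>d\<bar> \<le> 1\<close> by (simp add: sin_arccos_abs real_sqrt_unique)
  moreover have "cos (arccos d) = d" using \<open>\<bar>d\<bar> \<le> 1\<close> by (simp add: cos_arccos_abs)
  moreover have "d * u$1 - c * u$2 = w$1 * ((u$1)\<^sup>2 + (u$2)\<^sup>2)"
    and "c * u$1 + d * u$2 = w$2 * ((u$1)\<^sup>2 + (u$2)\<^sup>2)"
    by (simp_all add: c_def d_def cross2_def inner_vec2) algebra+
  ultimately have "w = rotate2 (arccos d) u"
    using unit by (simp add: vec_eq_iff forall_2)
  then show ?thesis by (simp add: u_def w_def d_def vangle_sgn)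
qed

definition polygon_edge :: "nat \<Rightarrow> (nat \<Rightarrow> real^2) \<Rightarrow> nat \<Rightarrow> real^2" where
  "polygon_edge n v j = v (Suc j mod n) - v j"

lemma convex_ccw_polygon_cross2_pos:
  assumes "convex_ccw_polygon n v" "i < n" "j < n" "j \<noteq> i" "j \<noteq> Suc i mod n"
  shows "cross2 (polygon_edge n v i) (v j - v i) > 0"
  using assms by (simp add: convex_ccw_polygon_def polygon_edge_def)

lemma gutkin_edge_rotation:
  assumes "convex_ccw_polygon n v" "2 \<le> k" "k < n" "j < n"
    and "pangle (v ((j + 1) mod n)) (v j) (v ((j + k) mod n)) = \<alpha>"
    and "pangle (v ((j + k - 1) mod n)) (v ((j + k) mod n)) (v j) = \<alpha>"
  shows "sgn (polygon_edge n v ((j + k - 1) mod n)) = rotate2 (2 * \<alpha>) (sgn (polygon_edge n v j))"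
proof -
  define m where "m = (j + k - 1) mod n"
  define c where "c = v ((j + k) mod n) - v j"
  have distinct_offsets: "(j + a) mod n \<noteq> (j + b) mod n" if "a < n" "b < n" "a \<noteq> b" for a b
    using mod_add_left_inj that by blast
  have m_Suc: "Suc m mod n = (j + k) mod n" using assms(2) by (simp add: m_def mod_Suc_eq)
  have "(j + k) mod n \<noteq> j" "(j + k) mod n \<noteq> Suc j mod n"
    using distinct_offsets[of k 0] distinct_offsets[of k 1] assms(2-4) by simp_all
  then have "cross2 (polygon_edge n v j) c > 0"
    using convex_ccw_polygon_cross2_pos[OF assms(1,4), of "(j + k) mod n"] assms(3)
    by (simp add: c_def)
  moreover have "vangle (polygon_edge n v j) c = \<alpha>"
    using assms(5) by (simp add: pangle_eq_vangle polygon_edge_def c_def)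
  ultimately have first_turn: "sgn c = rotate2 \<alpha> (sgn (polygon_edge n v j))"
    using sgn_eq_rotate2_vangle by blast
  have "m \<noteq> j"
    using distinct_offsets[of "k - 1" 0] assms(2-4) by (simp add: m_def)
  moreover have "Suc m mod n \<noteq> j" unfolding m_Suc by fact
  moreover have "m < n" using assms(3) by (simp add: m_def)
  ultimately have "cross2 (polygon_edge n v m) (v j - v m) > 0"
    using convex_ccw_polygon_cross2_pos[OF assms(1), of m j] assms(4) by auto
  moreover have "cross2 c (polygon_edge n v m) = cross2 (polygon_edge n v m) (v j - v m)"
    by (simp add: c_def polygon_edge_def m_Suc cross2_def algebra_simps)
  ultimately have "cross2 c (polygon_edge n v m) > 0" by simp
  moreover have "vangle (- polygon_edge n v m) (- c) = \<alpha>"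
    using assms(6) unfolding pangle_eq_vangle polygon_edge_def c_def m_def [symmetric] m_Suc
    by simp
  then have "vangle c (polygon_edge n v m) = \<alpha>"
    by (simp add: vangle_minus vangle_commute)
  ultimately have "sgn (polygon_edge n v m) = rotate2 \<alpha> (sgn c)"
    using sgn_eq_rotate2_vangle by blast
  with first_turn show ?thesis by (simp add: m_def rotate2_rotate2)
qed

lemma interior_angle_eq_arccos_edges:
  assumes "i < n"
  shows "interior_angle n v i
    = arccos (- (sgn (polygon_edge n v ((i + n - 1) mod n)) \<bullet> sgn (polygon_edge n v i)))"
proof -
  have "Suc ((i + n - 1) mod n) mod n = i"
    using assms by (simp add: mod_Suc_eq)
  then have "interior_angle n v i = vangle (- polygon_edge n v ((i + n - 1) mod n)) (polygon_edge n v i)"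
    using assms by (simp add: interior_angle_def pangle_eq_vangle polygon_edge_def)
  then show ?thesis by (simp add: vangle_sgn sgn_minus)
qed

lemma mod_add_pred_commute:
  fixes i k n :: nat
  assumes "1 \<le> k" "i < n"
  shows "((i + k - 1) mod n + n - 1) mod n = ((i + n - 1) mod n + k - 1) mod n"
proof -
  have "((i + k - 1) mod n + (n - 1)) mod n = (i + k - 1 + (n - 1)) mod n"
    by (rule mod_add_left_eq)
  moreover have "((i + n - 1) mod n + (k - 1)) mod n = (i + n - 1 + (k - 1)) mod n"
    by (rule mod_add_left_eq)
  moreover have "i + k - 1 + (n - 1) = i + n - 1 + (k - 1)" using assms by simp
  ultimately show ?thesis using assms by simp
qed

theorem mainTheorem9:
  fixes n k :: nat and v :: "nat \<Rightarrow> real^2"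
  assumes "2 \<le> k" and "2 * k \<le> n"
    and "gutkin_polygon n k v"
  shows "\<forall>i<n. interior_angle n v i = interior_angle n v ((i + k - 1) mod n)"
proof (intro allI impI)
  fix i assume "i < n"
  obtain \<alpha> where angles: "\<forall>j<n. pangle (v ((j + 1) mod n)) (v j) (v ((j + k) mod n)) = \<alpha> \<and>
      pangle (v ((j + k - 1) mod n)) (v ((j + k) mod n)) (v j) = \<alpha>"
    and convex: "convex_ccw_polygon n v"
    using assms(3) unfolding gutkin_polygon_def by blast
  define e where "e j = sgn (polygon_edge n v j)" for j
  have rotation: "e ((j + k - 1) mod n) = rotate2 (2 * \<alpha>) (e j)" if "j < n" for j
    using gutkin_edge_rotation[OF convex assms(1)] angles assms(2) that by (simp add: e_def)
  define p where "p = (i + n - 1) mod n"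
  have "p < n" using \<open>i < n\<close> by (simp add: p_def)
  have pred_shift: "((i + k - 1) mod n + n - 1) mod n = (p + k - 1) mod n"
    unfolding p_def using assms(1) \<open>i < n\<close> by (intro mod_add_pred_commute) simp_all
  have "interior_angle n v i = arccos (- (e p \<bullet> e i))"
    using interior_angle_eq_arccos_edges[OF \<open>i < n\<close>] by (simp add: e_def p_def)
  also have "\<dots> = arccos (- (e ((p + k - 1) mod n) \<bullet> e ((i + k - 1) mod n)))"
    using rotation[OF \<open>p < n\<close>] rotation[OF \<open>i < n\<close>] by (simp add: inner_rotate2)
  also have "\<dots> = interior_angle n v ((i + k - 1) mod n)"
    using interior_angle_eq_arccos_edges[of "(i + k - 1) mod n" n v] \<open>i < n\<close> assms(1)
    unfolding pred_shift e_def by simp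
  finally show "interior_angle n v i = interior_angle n v ((i + k - 1) mod n)" .
qed

end
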